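(* Let $\lambda>0$, $0<\varepsilon_g<1$, $f$ twice continuously differentiable satisfying $f(y)\le f(x)+\nabla f(x)^\top(y-x)+\frac12(y-x)^\top\nabla^2f(x)(y-x)+\frac{L_H}6\|y-x\|^3$, and $\varphi=f+\lambda\|\cdot\|_1$. Let $x^k\in\mathbb{R}^n$, $I^{k\varepsilon}_+=\{i:x^k_i>\varepsilon_g^{1/2}\}$, $I^{k\varepsilon}_-=\{i:x^k_i<-\varepsilon_g^{1/2}\}$, $I^{k\varepsilon}_{\neq0}=I^{k\varepsilon}_+\cup I^{k\varepsilon}_-$, $I^{k\varepsilon}_0=\{i:|x^k_i|\le\varepsilon_g^{1/2}\}$, and let $d^k\in\mathbb{R}^n$ satisfy $d^k_{I^{k\varepsilon}_0}=0$ (as in a Newton-CG step of PGN2CM). Let $H^k_{\neq0\varepsilon}=(\nabla^2f(x^k))_{I^{k\varepsilon}_{\neq0}}$, $g^k_{\neq0\varepsilon}=g^\varepsilon(x^k)_{I^{k\varepsilon}_{\neq0}}$, $d^k_{\neq0\varepsilon}=d^k_{I^{k\varepsilon}_{\neq0}}$, and $t^k_+=\min_{i\in J^k_+}\{-x^k_i/d^k_i\}$, $t^k_-=\min_{i\in J^k_-}\{-x^k_i/d^k_i\}$ with $J^k_+=\{i\in I^{k\varepsilon}_+:d^k_i<0\}$, $J^k_-=\{i\in I^{k\varepsilon}_-:d^k_i>0\}$ (each $+\infty$ if the set is empty). Then for any $t\in(0,\min\{t^k_+,t^k_-\}]$, $$\varphi(x^k+td^k)\le\varphi(x^k)+t(g^k_{\neq0\varepsilon})^\top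 d^k_{\neq0\varepsilon}+\frac12t^2(d^k_{\neq0\varepsilon})^\top H^k_{\neq0\varepsilon}d^k_{\neq0\varepsilon}+\frac{L_H}6t^3\|d^k_{\neq0\varepsilon}\|^3.$$
   Context: $g^\varepsilon(x)$: $g^\varepsilon_i=(\nabla f(x))_i+\lambda$ if $x_i>\varepsilon_g^{1/2}$, $(\nabla f(x))_i-\lambda$ if $x_i<-\varepsilon_g^{1/2}$, and $(\nabla f(x))_i-\min\{\max\{-\lambda-\varepsilon_g^{3/4},(\nabla f(x))_i\},\lambda+\varepsilon_g^{3/4}\}$ if $|x_i|\le\varepsilon_g^{1/2}$. $A_J$ denotes principal submatrix/subvector on index set $J$. In the paper the cubic bound on $f$ holds with constant $L_H$ on the level set $\{x:\varphi(x)\le\varphi(x^0)\}$. *)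

theory Defs
  imports "HOL-Analysis.Analysis" "HOL-Library.Extended_Real"
begin

definition l1norm :: "real^'n \<Rightarrow> real" where
  "l1norm x = (\<Sum>i\<in>UNIV. \<bar>x $ i\<bar>)"

definition phi :: "(real^'n \<Rightarrow> real) \<Rightarrow> real \<Rightarrow> real^'n \<Rightarrow> real" where
  "phi f lam x = f x + lam * l1norm x"

definition Iplus :: "real \<Rightarrow> real^'n \<Rightarrow> 'n set" where
  "Iplus eps x = {i. x $ i > sqrt eps}"

definition Iminus :: "real \<Rightarrow> real^'n \<Rightarrow> 'n set" where
  "Iminus eps x = {i. x $ i < - sqrt eps}"

definition Inz :: "real \<Rightarrow> real^'n \<Rightarrow> 'n set" where
  "Inz eps x = Iplus eps x \<union> Iminus eps x"

definition Izero :: "real \<Rightarrow> real^'n \<Rightarrow> 'n set" where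
  "Izero eps x = {i. \<bar>x $ i\<bar> \<le> sqrt eps}"

text \<open>g^eps(x), given the gradient vector gx = grad f(x).\<close>
definition geps :: "real \<Rightarrow> real \<Rightarrow> real^'n \<Rightarrow> real^'n \<Rightarrow> real^'n" where
  "geps lam eps gx x = (\<chi> i.
     if x $ i > sqrt eps then gx $ i + lam
     else if x $ i < - sqrt eps then gx $ i - lam
     else gx $ i - min (max (- lam - eps powr (3/4)) (gx $ i)) (lam + eps powr (3/4)))"

definition Jplus :: "real \<Rightarrow> real^'n \<Rightarrow> real^'n \<Rightarrow> 'n set" where
  "Jplus eps x d = {i \<in> Iplus eps x. d $ i < 0}"

definition Jminus :: "real \<Rightarrow> real^'n \<Rightarrow> real^'n \<Rightarrow> 'n set" where
  "Jminus eps x d = {i \<in> Iminus eps x. d $ i > 0}"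

definition ratio_min :: "'n::finite set \<Rightarrow> real^'n \<Rightarrow> real^'n \<Rightarrow> ereal" where
  "ratio_min J x d = (if J = {} then \<infinity> else ereal (Min ((\<lambda>i. - x $ i / d $ i) ` J)))"

definition tplus :: "real \<Rightarrow> real^'n::finite \<Rightarrow> real^'n \<Rightarrow> ereal" where
  "tplus eps x d = ratio_min (Jplus eps x d) x d"

definition tminus :: "real \<Rightarrow> real^'n::finite \<Rightarrow> real^'n \<Rightarrow> ereal" where
  "tminus eps x d = ratio_min (Jminus eps x d) x d"

end

theory Submission
  imports Defs
begin

text \<open>Up to the step length min(t+, t-) no coordinate of x outside the \<open>\<epsilon>\<close>-zero band changes
  sign, while the coordinates inside the band do not move since d vanishes there.  Hence the
  \<open>\<ell>\<^sub>1\<close> term of \<open>\<phi>\<close> is affine along the step, with slope \<open>\<lambda> sgn(x\<^sub>i)\<close>, which is exactly the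
  correction turning \<open>\<nabla>f\<close> into \<open>g\<^sup>\<epsilon>\<close> on the nonzero indices; the cubic upper bound on f
  then gives the claim after restricting all sums to those indices.\<close>

lemma abs_add_mult_eq_if_no_sign_change:
  fixes a b t :: real
  assumes "0 \<le> t" "a \<noteq> 0" "sgn a * b < 0 \<Longrightarrow> t \<le> - a / b"
  shows "\<bar>a + t * b\<bar> = \<bar>a\<bar> + t * (sgn a * b)"
proof -
  have expand: "sgn a * (a + t * b) = \<bar>a\<bar> + t * (sgn a * b)"
    by (cases "a > 0") (auto simp: sgn_if)
  have "0 \<le> sgn a * (a + t * b)"
  proof (cases "sgn a * b < 0")
    case True
    then have "t \<le> - a / b" "b \<noteq> 0" using assms(3) by auto
    with True assms(1,2) show ?thesis
      by (cases "a > 0") (auto simp: sgn_if field_simps)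
  next
    case False
    with assms(1) show ?thesis by (simp add: expand)
  qed
  moreover have "\<bar>sgn a\<bar> = 1" using assms(2) by simp
  ultimately have "\<bar>a + t * b\<bar> = sgn a * (a + t * b)"
    by (metis abs_mult abs_of_nonneg mult_1)
  then show ?thesis by (simp add: expand)
qed

lemma ratio_min_le:
  fixes J :: "'n::finite set"
  assumes "i \<in> J"
  shows "ratio_min J x d \<le> ereal (- x $ i / d $ i)"
  using assms by (auto simp: ratio_min_def intro: Min_le)

lemma Izero_eq_Compl_Inz: "Izero eps x = - Inz eps x"
  by (auto simp: Izero_def Inz_def Iplus_def Iminus_def)

lemma sgn_on_Inz:
  assumes "0 \<le> eps" "i \<in> Inz eps x"
  shows "sgn (x $ i) = (if i \<in> Iplus eps x then 1 else - 1)"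
proof -
  have "0 \<le> sqrt eps" using assms(1) by simp
  have "i \<in> Iplus eps x \<Longrightarrow> x $ i > 0" "i \<in> Iminus eps x \<Longrightarrow> x $ i < 0"
    by (auto simp: Iplus_def Iminus_def) (use \<open>0 \<le> sqrt eps\<close> in linarith)+
  with assms(2) show ?thesis
    by (auto simp: Inz_def)
qed

lemma geps_on_Inz:
  assumes "0 \<le> eps" "i \<in> Inz eps x"
  shows "geps lam eps gx x $ i = gx $ i + lam * sgn (x $ i)"
  using assms sgn_on_Inz[OF assms]
  by (auto simp: geps_def Inz_def Iplus_def Iminus_def)

lemma step_le_ratio_on_Inz:
  assumes "0 \<le> eps" "i \<in> Inz eps x" "sgn (x $ i) * d $ i < 0"
    and "ereal t \<le> min (tplus eps x d) (tminus eps x d)"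
  shows "t \<le> - x $ i / d $ i"
proof -
  have "i \<in> Jplus eps x d \<or> i \<in> Jminus eps x d"
    using assms(3) sgn_on_Inz[OF assms(1,2)] assms(2)
    by (auto simp: Jplus_def Jminus_def Inz_def split: if_splits)
  then have "min (tplus eps x d) (tminus eps x d) \<le> ereal (- x $ i / d $ i)"
    unfolding tplus_def tminus_def using ratio_min_le min.coboundedI1 min.coboundedI2 by metis
  with assms(4) show ?thesis by (metis order.trans ereal_less_eq(3))
qed

lemma l1norm_along_step:
  assumes "0 \<le> eps" "0 \<le> t"
    and supp: "\<And>i. i \<notin> Inz eps x \<Longrightarrow> d $ i = 0"
    and "ereal t \<le> min (tplus eps x d) (tminus eps x d)"
  shows "l1norm (x + t *\<^sub>R d) = l1norm x + t * (\<Sum>i\<in>Inz eps x. sgn (x $ i) * d $ i)"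
proof -
  have coord: "\<bar>x $ i + t * d $ i\<bar> = \<bar>x $ i\<bar> + t * (sgn (x $ i) * d $ i)" for i
  proof (cases "i \<in> Inz eps x")
    case True
    then have "x $ i \<noteq> 0" using sgn_on_Inz[OF assms(1) True] by (auto split: if_splits)
    with True assms show ?thesis
      by (intro abs_add_mult_eq_if_no_sign_change step_le_ratio_on_Inz) auto
  qed (simp add: supp)
  have "l1norm (x + t *\<^sub>R d) = l1norm x + t * (\<Sum>i\<in>UNIV. sgn (x $ i) * d $ i)"
    by (simp add: l1norm_def coord sum.distrib sum_distrib_left)
  also have "(\<Sum>i\<in>UNIV. sgn (x $ i) * d $ i) = (\<Sum>i\<in>Inz eps x. sgn (x $ i) * d $ i)"
    by (rule sum.mono_neutral_right) (auto simp: supp)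
  finally show ?thesis .
qed

lemma inner_eq_sum_on_support:
  fixes v d :: "real^'n"
  assumes "\<And>i. i \<notin> S \<Longrightarrow> d $ i = 0"
  shows "v \<bullet> d = (\<Sum>i\<in>S. v $ i * d $ i)"
  unfolding inner_vec_def inner_real_def
  by (rule sum.mono_neutral_right) (auto simp: assms)

lemma quadratic_form_eq_sum_on_support:
  fixes A :: "real^'n^'n" and d :: "real^'n"
  assumes "\<And>i. i \<notin> S \<Longrightarrow> d $ i = 0"
  shows "d \<bullet> (A *v d) = (\<Sum>i\<in>S. \<Sum>j\<in>S. d $ i * A $ i $ j * d $ j)"
proof -
  have "d \<bullet> (A *v d) = (\<Sum>i\<in>UNIV. \<Sum>j\<in>UNIV. d $ i * A $ i $ j * d $ j)"
    by (simp add: inner_vec_def matrix_vector_mult_def sum_distrib_left mult.assoc)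
  also have "\<dots> = (\<Sum>i\<in>UNIV. \<Sum>j\<in>S. d $ i * A $ i $ j * d $ j)"
    by (intro sum.cong refl sum.mono_neutral_right) (auto simp: assms)
  also have "\<dots> = (\<Sum>i\<in>S. \<Sum>j\<in>S. d $ i * A $ i $ j * d $ j)"
    by (rule sum.mono_neutral_right) (auto simp: assms)
  finally show ?thesis .
qed

lemma norm_eq_L2_set_on_support:
  fixes d :: "real^'n"
  assumes "\<And>i. i \<notin> S \<Longrightarrow> d $ i = 0"
  shows "norm d = L2_set (\<lambda>i. d $ i) S"
  unfolding norm_vec_def L2_set_def real_norm_def power2_abs
  by (rule arg_cong[where f = sqrt], rule sum.mono_neutral_right) (auto simp: assms)

theorem lemma8:
  fixes f :: "real^'n \<Rightarrow> real"
    and G :: "real^'n \<Rightarrow> real^'n"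
    and H :: "real^'n \<Rightarrow> real^'n^'n"
    and lam eps LH t :: real
    and x d :: "real^'n"
  assumes lam_pos: "lam > 0"
    and eps: "0 < eps" "eps < 1"
    and grad: "\<And>y. (f has_derivative (\<lambda>h. G y \<bullet> h)) (at y)"
    and hess: "\<And>y. (G has_derivative (\<lambda>h. H y *v h)) (at y)"
    and hess_cont: "continuous_on UNIV H"
    and cubic: "\<And>y z. f z \<le> f y + G y \<bullet> (z - y) + 1/2 * ((z - y) \<bullet> (H y *v (z - y)))
                          + LH / 6 * norm (z - y) ^ 3"
    and d_zero: "\<And>i. i \<in> Izero eps x \<Longrightarrow> d $ i = 0"
    and t_pos: "0 < t"
    and t_le: "ereal t \<le> min (tplus eps x d) (tminus eps x d)"
  shows "phi f lam (x + t *\<^sub>R d) \<le> phi f lam x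
           + t * (\<Sum>i\<in>Inz eps x. geps lam eps (G x) x $ i * d $ i)
           + 1/2 * t^2 * (\<Sum>i\<in>Inz eps x. \<Sum>j\<in>Inz eps x. d $ i * (H x $ i $ j) * d $ j)
           + LH / 6 * t^3 * (L2_set (\<lambda>i. d $ i) (Inz eps x)) ^ 3"
proof -
  have supp: "\<And>i. i \<notin> Inz eps x \<Longrightarrow> d $ i = 0"
    using d_zero by (simp add: Izero_eq_Compl_Inz)
  have f_step: "f (x + t *\<^sub>R d) \<le> f x + t * (G x \<bullet> d) + 1/2 * t^2 * (d \<bullet> (H x *v d))
                  + LH / 6 * t^3 * norm d ^ 3"
    using cubic[where y = x and z = "x + t *\<^sub>R d"] t_pos
    by (simp add: matrix_vector_mult_scaleR power2_eq_square power_mult_distrib)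
  have quad: "(\<Sum>i\<in>Inz eps x. \<Sum>j\<in>Inz eps x. d $ i * (H x $ i $ j) * d $ j) = d \<bullet> (H x *v d)"
    by (rule quadratic_form_eq_sum_on_support[OF supp, symmetric])
  have norm: "L2_set (\<lambda>i. d $ i) (Inz eps x) = norm d"
    by (rule norm_eq_L2_set_on_support[OF supp, symmetric])
  have lin: "(\<Sum>i\<in>Inz eps x. geps lam eps (G x) x $ i * d $ i)
               = G x \<bullet> d + lam * (\<Sum>i\<in>Inz eps x. sgn (x $ i) * d $ i)"
    using eps(1) by (simp add: inner_eq_sum_on_support[OF supp] geps_on_Inz algebra_simps
                               sum.distrib sum_distrib_left)
  show ?thesis
    using f_step l1norm_along_step[OF _ _ supp t_le] eps(1) t_pos
    unfolding phi_def quad norm lin by (simp add: algebra_simps)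
qed

end
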